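(* Consider a series system (so $\phi(s)=1$ if and only if $s_k=1$ for all $k$), with an arbitrary joint prior distribution of the component states and with inspection error rates $\epsilon_{FA},\epsilon_{FS}\in[0,1/2)$ identical for all components. For any two components $c_i,c_j$ with $p_i\ge p_j$, we have $I_i\supseteq I_j$, i.e. $p_{\omega|y_i=1}\le p_{\omega|y_j=1}\le p_{\omega|y_j=0}\le p_{\omega|y_i=0}$, and consequently $\mathrm{VoI}_G(i)\ge\mathrm{VoI}_G(j)$ for every concave function $l^*$. In particular, the most vulnerable component (the one with the highest marginal failure probability) has the highest $\mathrm{VoI}_G$, regardless of $l^*$.
   Context: A system consists of $N$ binary components $c_1,\dots,c_N$ with random joint state $s=(s_1,\dots,s_N)\in\{0,1\}^N$ ($s_k=1$: working; $s_k=0$: failed), with arbitrary prior distribution $p_s$. The system state is $u=\phi(s)$ ($u=0$: system failure), $p_\pi=\mathbb{P}[u=0]$, and $p_k=\mathbb{P}[s_k=0]$ is the marginal failure probability of $c_k$. Inspecting $c_k$ yields a binary observation $y_k$ (alarm $y_k=0$, silence $y_k=1$) which, given $s$, depends only on $s_k$, with $\mathbb{P}[y_k=1\mid s_k=0]=\epsilon_{FS}$ and $\mathbb{P}[y_k=0\mid s_k=1]=\epsilon_{FA}$. Then $h_k=\mathbb{P}[y_k=0]=\epsilon_{FA}+(1-\epsilon_{FA}-\epsilon_{FS})p_k$; posterior system failure probabilities are $p_{\omega|y_k=b}=\mathbb{P}[u=0\mid y_k=b]$ (defined when the conditioning event has positive probability), and $I_k=[p_{\omega|y_k=1},p_{\omega|y_k=0}]$.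 Global metric: for a concave $l^*:[0,1]\to\mathbb{R}$, $L^G_\pi=l^*(p_\pi)$, $L^G_\omega(k)=h_k\,l^*(p_{\omega|y_k=0})+(1-h_k)\,l^*(p_{\omega|y_k=1})$ (a term with zero probability is omitted), and $\mathrm{VoI}_G(k)=L^G_\pi-L^G_\omega(k)$. *)

theory Defs
  imports "HOL-Probability.Probability"
begin

(* Components are indexed by a finite type 'c (N = CARD('c)).
   A joint state is s :: 'c \<Rightarrow> bool, with s k = True meaning c_k works (s_k = 1).  A structure function
   phi :: ('c \<Rightarrow> bool) \<Rightarrow> bool gives the system state (True = working, u = 1).
   An observation value b :: bool encodes y_k (b = False: alarm y_k = 0; b = True: silence y_k = 1). *)

definition series :: "('c \<Rightarrow> bool) \<Rightarrow> bool" where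
  "series s = (\<forall>k. s k)"

(* P[y_k = b | s_k] *)
definition obs_lik :: "real \<Rightarrow> real \<Rightarrow> bool \<Rightarrow> bool \<Rightarrow> real" where
  "obs_lik eFA eFS sk b =
     (if b then (if sk then 1 - eFA else eFS) else (if sk then eFA else 1 - eFS))"

definition p_comp :: "('c \<Rightarrow> bool) pmf \<Rightarrow> 'c \<Rightarrow> real" where
  "p_comp P k = measure_pmf.prob P {s. \<not> s k}"

definition p_sys :: "(('c \<Rightarrow> bool) \<Rightarrow> bool) \<Rightarrow> ('c \<Rightarrow> bool) pmf \<Rightarrow> real" where
  "p_sys phi P = measure_pmf.prob P {s. \<not> phi s}"

definition obs_prob :: "('c::finite \<Rightarrow> bool) pmf \<Rightarrow> real \<Rightarrow> real \<Rightarrow> 'c \<Rightarrow> bool \<Rightarrow> real" where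
  "obs_prob P eFA eFS k b = (\<Sum>s\<in>UNIV. pmf P s * obs_lik eFA eFS (s k) b)"

definition joint_fail_obs :: "(('c::finite \<Rightarrow> bool) \<Rightarrow> bool) \<Rightarrow> ('c \<Rightarrow> bool) pmf
    \<Rightarrow> real \<Rightarrow> real \<Rightarrow> 'c \<Rightarrow> bool \<Rightarrow> real" where
  "joint_fail_obs phi P eFA eFS k b =
     (\<Sum>s\<in>{s. \<not> phi s}. pmf P s * obs_lik eFA eFS (s k) b)"

definition h_comp :: "('c::finite \<Rightarrow> bool) pmf \<Rightarrow> real \<Rightarrow> real \<Rightarrow> 'c \<Rightarrow> real" where
  "h_comp P eFA eFS k = obs_prob P eFA eFS k False"

(* p_{omega | y_k = b} = P[u = 0 | y_k = b]  (meaningful only when P[y_k = b] > 0) *)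
definition post_fail :: "(('c::finite \<Rightarrow> bool) \<Rightarrow> bool) \<Rightarrow> ('c \<Rightarrow> bool) pmf
    \<Rightarrow> real \<Rightarrow> real \<Rightarrow> 'c \<Rightarrow> bool \<Rightarrow> real" where
  "post_fail phi P eFA eFS k b = joint_fail_obs phi P eFA eFS k b / obs_prob P eFA eFS k b"

(* L^G_omega(k); terms with zero probability are omitted *)
definition LG_post :: "(real \<Rightarrow> real) \<Rightarrow> (('c::finite \<Rightarrow> bool) \<Rightarrow> bool) \<Rightarrow> ('c \<Rightarrow> bool) pmf
    \<Rightarrow> real \<Rightarrow> real \<Rightarrow> 'c \<Rightarrow> real" where
  "LG_post l phi P eFA eFS k =
     (let h = h_comp P eFA eFS k in
       (if h \<noteq> 0 then h * l (post_fail phi P eFA eFS k False) else 0)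
     + (if 1 - h \<noteq> 0 then (1 - h) * l (post_fail phi P eFA eFS k True) else 0))"

definition VoI_G :: "(real \<Rightarrow> real) \<Rightarrow> (('c::finite \<Rightarrow> bool) \<Rightarrow> bool) \<Rightarrow> ('c \<Rightarrow> bool) pmf
    \<Rightarrow> real \<Rightarrow> real \<Rightarrow> 'c \<Rightarrow> real" where
  "VoI_G l phi P eFA eFS k = l (p_sys phi P) - LG_post l phi P eFA eFS k"

end

theory Submission
  imports Defs
begin

text \<open>
For a series system the posteriors after inspecting \<open>c\<^sub>k\<close> depend on \<open>c\<^sub>k\<close> only through
\<open>q = p\<^sub>k\<close>, as linear-fractional functions of \<open>q\<close>: the alarm posterior increases and the
silence posterior decreases in \<open>q\<close>, and they bracket \<open>p\<^sub>\<pi>\<close>. A larger \<open>q\<close> thus spreads the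
two-point distribution of the posterior, whose mean is always \<open>p\<^sub>\<pi>\<close>, further apart, and
comparing \<open>l\<^sup>*\<close> with its chord through the outer posteriors shows that the expected
posterior loss can only decrease.
\<close>

lemma concave_on_mean_preserving_spread:
  fixes f :: "real \<Rightarrow> real"
  assumes conc: "concave_on {a..b} f"
    and mean: "lam * b + (1 - lam) * a = w * u + (1 - w) * v"
    and w: "0 \<le> w" "w \<le> 1"
    and u: "w \<noteq> 0 \<Longrightarrow> u \<in> {a..b}"
    and v: "w \<noteq> 1 \<Longrightarrow> v \<in> {a..b}"
  shows "lam * f b + (1 - lam) * f a \<le> w * f u + (1 - w) * f v"
proof -
  define slope where "slope = (f b - f a) / (b - a)"
  define chord where "chord z = slope * (z - a) + f a" for z
  have below: "chord z \<le> f z" if "z \<in> {a..b}" for z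
    using concave_onD_Icc'[OF conc that] by (simp add: chord_def slope_def)
  have slope: "slope * (b - a) = f b - f a"
    by (cases "a = b") (simp_all add: slope_def)
  have "w * chord u \<le> w * f u"
    using u below w by (cases "w = 0") (auto intro: mult_left_mono)
  moreover have "(1 - w) * chord v \<le> (1 - w) * f v"
    using v below w by (cases "w = 1") (auto intro: mult_left_mono)
  moreover have "w * chord u + (1 - w) * chord v = slope * (w * u + (1 - w) * v - a) + f a"
    unfolding chord_def by (simp add: algebra_simps)
  moreover have "slope * (w * u + (1 - w) * v - a) = lam * f b + (1 - lam) * f a - f a"
  proof -
    have "slope * (w * u + (1 - w) * v - a) = lam * (slope * (b - a))"
      unfolding mean[symmetric] by (simp add: algebra_simps)
    then show ?thesis
      unfolding slope by (simp add: algebra_simps)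
  qed
  ultimately show ?thesis by linarith
qed

text \<open>Below, \<open>\<alpha>\<close> and \<open>\<beta>\<close> are the likelihoods of an observation of \<open>c\<^sub>k\<close> given \<open>s\<^sub>k = 1\<close>
resp. \<open>s\<^sub>k = 0\<close>, \<open>q = p\<^sub>k\<close> and \<open>p = p\<^sub>\<pi>\<close>. The observation has probability
\<open>\<alpha> (1 - q) + \<beta> q\<close>; in a series system it occurs together with system failure with
probability \<open>\<alpha> (p - q) + \<beta> q\<close>, because the failed states are those where \<open>c\<^sub>k\<close> works
(mass \<open>p - q\<close>) and those where \<open>c\<^sub>k\<close> has failed (mass \<open>q\<close>). If the observation is
impossible, \<open>series_posterior\<close> takes the junk value \<open>0\<close>; the monotonicity lemmas hold
regardless.\<close>

definition obs_marginal :: "real \<Rightarrow> real \<Rightarrow> real \<Rightarrow> real" where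
  "obs_marginal \<alpha> \<beta> q = \<alpha> * (1 - q) + \<beta> * q"

definition series_posterior :: "real \<Rightarrow> real \<Rightarrow> real \<Rightarrow> real \<Rightarrow> real" where
  "series_posterior \<alpha> \<beta> p q = (\<alpha> * (p - q) + \<beta> * q) / obs_marginal \<alpha> \<beta> q"

lemma obs_marginal_nonneg:
  "0 \<le> \<alpha> \<Longrightarrow> 0 \<le> \<beta> \<Longrightarrow> 0 \<le> q \<Longrightarrow> q \<le> 1 \<Longrightarrow> 0 \<le> obs_marginal \<alpha> \<beta> q"
  by (simp add: obs_marginal_def)

lemma obs_marginal_diff: "obs_marginal \<alpha> \<beta> x - obs_marginal \<alpha> \<beta> y = (\<beta> - \<alpha>) * (x - y)"
  by (simp add: obs_marginal_def algebra_simps)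

lemma obs_marginal_compl: "obs_marginal (1 - \<alpha>) (1 - \<beta>) q = 1 - obs_marginal \<alpha> \<beta> q"
  by (simp add: obs_marginal_def algebra_simps)

lemma series_joint_bounds:
  assumes "0 \<le> \<alpha>" "0 \<le> \<beta>" "0 \<le> q" "q \<le> p" "p \<le> 1"
  shows "0 \<le> \<alpha> * (p - q) + \<beta> * q" "\<alpha> * (p - q) + \<beta> * q \<le> obs_marginal \<alpha> \<beta> q"
proof -
  show "0 \<le> \<alpha> * (p - q) + \<beta> * q"
    using assms by simp
  have "obs_marginal \<alpha> \<beta> q - (\<alpha> * (p - q) + \<beta> * q) = \<alpha> * (1 - p)"
    by (simp add: obs_marginal_def algebra_simps)
  then show "\<alpha> * (p - q) + \<beta> * q \<le> obs_marginal \<alpha> \<beta> q"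
    using assms mult_nonneg_nonneg[of \<alpha> "1 - p"] by linarith
qed

lemma series_posterior_nonneg:
  "0 \<le> \<alpha> \<Longrightarrow> 0 \<le> \<beta> \<Longrightarrow> 0 \<le> q \<Longrightarrow> q \<le> p \<Longrightarrow> p \<le> 1 \<Longrightarrow> 0 \<le> series_posterior \<alpha> \<beta> p q"
  using series_joint_bounds[of \<alpha> \<beta> q p] obs_marginal_nonneg[of \<alpha> \<beta> q]
  unfolding series_posterior_def by simp

lemma series_posterior_le_1:
  "0 \<le> \<alpha> \<Longrightarrow> 0 \<le> \<beta> \<Longrightarrow> 0 \<le> q \<Longrightarrow> q \<le> p \<Longrightarrow> p \<le> 1 \<Longrightarrow> series_posterior \<alpha> \<beta> p q \<le> 1"
  using series_joint_bounds[of \<alpha> \<beta> q p] obs_marginal_nonneg[of \<alpha> \<beta> q]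
  unfolding series_posterior_def by (cases "obs_marginal \<alpha> \<beta> q = 0") (auto simp: divide_le_eq_1)

lemma obs_marginal_mult_series_posterior:
  assumes "0 \<le> \<alpha>" "0 \<le> \<beta>" "0 \<le> q" "q \<le> p" "p \<le> 1"
  shows "obs_marginal \<alpha> \<beta> q * series_posterior \<alpha> \<beta> p q = \<alpha> * (p - q) + \<beta> * q"
  using series_joint_bounds[OF assms] unfolding series_posterior_def
  by (cases "obs_marginal \<alpha> \<beta> q = 0") simp_all

lemma series_posterior_minus_prior:
  assumes "obs_marginal \<alpha> \<beta> q \<noteq> 0"
  shows "series_posterior \<alpha> \<beta> p q - p = (\<beta> - \<alpha>) * q * (1 - p) / obs_marginal \<alpha> \<beta> q"
  using assms unfolding series_posterior_def
  by (simp add: field_simps) (simp add: obs_marginal_def algebra_simps)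

lemma series_posterior_ge_prior:
  assumes "\<alpha> \<le> \<beta>" "0 \<le> q" "p \<le> 1" "0 < obs_marginal \<alpha> \<beta> q"
  shows "p \<le> series_posterior \<alpha> \<beta> p q"
proof -
  have "0 \<le> (\<beta> - \<alpha>) * q * (1 - p) / obs_marginal \<alpha> \<beta> q"
    using assms by simp
  then show ?thesis
    using series_posterior_minus_prior[of \<alpha> \<beta> q p] assms by linarith
qed

lemma series_posterior_le_prior:
  assumes "\<beta> \<le> \<alpha>" "0 \<le> \<alpha>" "0 \<le> \<beta>" "0 \<le> q" "q \<le> p" "p \<le> 1"
  shows "series_posterior \<alpha> \<beta> p q \<le> p"
proof (cases "obs_marginal \<alpha> \<beta> q = 0")
  case True
  then show ?thesis using assms by (simp add: series_posterior_def)
next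
  case False
  have "0 < obs_marginal \<alpha> \<beta> q"
    using False obs_marginal_nonneg[of \<alpha> \<beta> q] assms by simp
  then have "(\<beta> - \<alpha>) * q * (1 - p) / obs_marginal \<alpha> \<beta> q \<le> 0"
    using assms by (simp add: divide_nonpos_pos mult_nonpos_nonneg)
  then show ?thesis
    using series_posterior_minus_prior[OF False, of p] by linarith
qed

lemma series_posterior_diff:
  assumes "obs_marginal \<alpha> \<beta> x \<noteq> 0" "obs_marginal \<alpha> \<beta> y \<noteq> 0"
  shows "series_posterior \<alpha> \<beta> p x - series_posterior \<alpha> \<beta> p y
    = \<alpha> * (\<beta> - \<alpha>) * (1 - p) * (x - y) / (obs_marginal \<alpha> \<beta> x * obs_marginal \<alpha> \<beta> y)"
  using assms unfolding series_posterior_def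
  by (simp add: field_simps) (simp add: obs_marginal_def algebra_simps)

lemma series_posterior_mono:
  assumes "0 \<le> \<alpha>" "\<alpha> \<le> \<beta>" "0 \<le> y" "y \<le> x" "x \<le> p" "p \<le> 1"
  shows "series_posterior \<alpha> \<beta> p y \<le> series_posterior \<alpha> \<beta> p x"
proof (cases "obs_marginal \<alpha> \<beta> y = 0")
  case True
  then have "series_posterior \<alpha> \<beta> p y = 0"
    by (simp add: series_posterior_def)
  then show ?thesis
    using series_posterior_nonneg[of \<alpha> \<beta> x p] assms by simp
next
  case False
  have pos_y: "0 < obs_marginal \<alpha> \<beta> y"
    using False obs_marginal_nonneg[of \<alpha> \<beta> y] assms by simp
  moreover have "obs_marginal \<alpha> \<beta> y \<le> obs_marginal \<alpha> \<beta> x"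
    using obs_marginal_diff[of \<alpha> \<beta> x y] mult_nonneg_nonneg[of "\<beta> - \<alpha>" "x - y"] assms
    by linarith
  ultimately have pos_x: "0 < obs_marginal \<alpha> \<beta> x"
    by linarith
  have "0 \<le> \<alpha> * (\<beta> - \<alpha>) * (1 - p) * (x - y)
      / (obs_marginal \<alpha> \<beta> x * obs_marginal \<alpha> \<beta> y)"
    using assms pos_x pos_y by (intro divide_nonneg_pos mult_nonneg_nonneg mult_pos_pos) auto
  moreover have "series_posterior \<alpha> \<beta> p x - series_posterior \<alpha> \<beta> p y
      = \<alpha> * (\<beta> - \<alpha>) * (1 - p) * (x - y) / (obs_marginal \<alpha> \<beta> x * obs_marginal \<alpha> \<beta> y)"
    using pos_x pos_y by (intro series_posterior_diff) auto
  ultimately show ?thesis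
    by (metis diff_ge_0_iff_ge)
qed

lemma series_posterior_antimono:
  assumes "0 \<le> \<beta>" "\<beta> \<le> \<alpha>" "0 \<le> y" "y \<le> x" "x \<le> p" "p \<le> 1"
  shows "series_posterior \<alpha> \<beta> p x \<le> series_posterior \<alpha> \<beta> p y"
proof (cases "obs_marginal \<alpha> \<beta> x = 0")
  case True
  then have "series_posterior \<alpha> \<beta> p x = 0"
    by (simp add: series_posterior_def)
  then show ?thesis
    using series_posterior_nonneg[of \<alpha> \<beta> y p] assms by simp
next
  case False
  have pos_x: "0 < obs_marginal \<alpha> \<beta> x"
    using False obs_marginal_nonneg[of \<alpha> \<beta> x] assms by simp
  moreover have "obs_marginal \<alpha> \<beta> x \<le> obs_marginal \<alpha> \<beta> y"
    using obs_marginal_diff[of \<alpha> \<beta> x y] mult_nonpos_nonneg[of "\<beta> - \<alpha>" "x - y"] assms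
    by linarith
  ultimately have pos_y: "0 < obs_marginal \<alpha> \<beta> y"
    by linarith
  have "\<alpha> * (\<beta> - \<alpha>) * (1 - p) * (x - y)
      / (obs_marginal \<alpha> \<beta> x * obs_marginal \<alpha> \<beta> y) \<le> 0"
    using assms pos_x pos_y
    by (intro divide_nonpos_pos mult_nonpos_nonneg mult_nonneg_nonpos) auto
  moreover have "series_posterior \<alpha> \<beta> p x - series_posterior \<alpha> \<beta> p y
      = \<alpha> * (\<beta> - \<alpha>) * (1 - p) * (x - y) / (obs_marginal \<alpha> \<beta> x * obs_marginal \<alpha> \<beta> y)"
    using pos_x pos_y by (intro series_posterior_diff) auto
  ultimately show ?thesis
    by (metis diff_le_0_iff_le)
qed

lemma series_posterior_mean:
  assumes "0 \<le> \<alpha>" "\<alpha> \<le> 1" "0 \<le> \<beta>" "\<beta> \<le> 1" "0 \<le> q" "q \<le> p" "p \<le> 1"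
  shows "obs_marginal \<alpha> \<beta> q * series_posterior \<alpha> \<beta> p q
      + obs_marginal (1 - \<alpha>) (1 - \<beta>) q * series_posterior (1 - \<alpha>) (1 - \<beta>) p q = p"
  using obs_marginal_mult_series_posterior[of \<alpha> \<beta> q p]
    obs_marginal_mult_series_posterior[of "1 - \<alpha>" "1 - \<beta>" q p] assms
  by (simp add: algebra_simps)

lemma series_posterior_loss_antimono:
  fixes l :: "real \<Rightarrow> real"
  assumes conc: "concave_on {0..1} l"
    and lik: "0 \<le> \<alpha>" "\<alpha> < \<beta>" "\<beta> \<le> 1"
    and q: "0 \<le> y" "y \<le> x" "x \<le> p" "p \<le> 1"
  shows "obs_marginal \<alpha> \<beta> x * l (series_posterior \<alpha> \<beta> p x)
         + obs_marginal (1 - \<alpha>) (1 - \<beta>) x * l (series_posterior (1 - \<alpha>) (1 - \<beta>) p x)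
       \<le> obs_marginal \<alpha> \<beta> y * l (series_posterior \<alpha> \<beta> p y)
         + obs_marginal (1 - \<alpha>) (1 - \<beta>) y * l (series_posterior (1 - \<alpha>) (1 - \<beta>) p y)"
proof (cases "x = y")
  case True
  then show ?thesis by simp
next
  case False
  define a where "a = series_posterior (1 - \<alpha>) (1 - \<beta>) p x"
  define b where "b = series_posterior \<alpha> \<beta> p x"
  define u where "u = series_posterior \<alpha> \<beta> p y"
  define v where "v = series_posterior (1 - \<alpha>) (1 - \<beta>) p y"
  have "0 < (\<beta> - \<alpha>) * (x - y)"
    using False lik q by simp
  then have pos_x: "0 < obs_marginal \<alpha> \<beta> x"
    using obs_marginal_diff[of \<alpha> \<beta> x y] obs_marginal_nonneg[of \<alpha> \<beta> y] lik q by linarith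
  have w: "0 \<le> obs_marginal \<alpha> \<beta> y" "obs_marginal \<alpha> \<beta> y \<le> 1"
    using obs_marginal_nonneg[of \<alpha> \<beta> y] obs_marginal_nonneg[of "1 - \<alpha>" "1 - \<beta>" y] lik q
    unfolding obs_marginal_compl by auto
  have a_le_p: "a \<le> p"
    unfolding a_def using lik q by (intro series_posterior_le_prior) auto
  have p_le_b: "p \<le> b"
    unfolding b_def using lik q pos_x by (intro series_posterior_ge_prior) auto
  have "u \<in> {a..b}" if "obs_marginal \<alpha> \<beta> y \<noteq> 0"
    using series_posterior_ge_prior[of \<alpha> \<beta> y p] series_posterior_mono[of \<alpha> \<beta> y x p]
      a_le_p that w lik q
    by (auto simp: u_def b_def)
  moreover have "v \<in> {a..b}"
    using series_posterior_antimono[of "1 - \<beta>" "1 - \<alpha>" y x p]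
      series_posterior_le_prior[of "1 - \<beta>" "1 - \<alpha>" y p] p_le_b lik q
    by (auto simp: a_def v_def)
  moreover have "concave_on {a..b} l"
  proof -
    have "0 \<le> a"
      unfolding a_def using lik q by (intro series_posterior_nonneg) auto
    moreover have "b \<le> 1"
      unfolding b_def using lik q by (intro series_posterior_le_1) auto
    ultimately show ?thesis
      using conc unfolding concave_on_def by (auto elim: convex_on_subset)
  qed
  ultimately have "obs_marginal \<alpha> \<beta> x * l b + (1 - obs_marginal \<alpha> \<beta> x) * l a
      \<le> obs_marginal \<alpha> \<beta> y * l u + (1 - obs_marginal \<alpha> \<beta> y) * l v"
    using series_posterior_mean[of \<alpha> \<beta> x p] series_posterior_mean[of \<alpha> \<beta> y p] w lik q
    unfolding a_def b_def u_def v_def obs_marginal_compl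
    by (intro concave_on_mean_preserving_spread) auto
  then show ?thesis
    unfolding obs_marginal_compl a_def b_def u_def v_def .
qed

lemma sum_pmf_obs_lik:
  fixes P :: "('c::finite \<Rightarrow> bool) pmf"
  shows "(\<Sum>s\<in>S. pmf P s * obs_lik eFA eFS (s k) b)
     = obs_lik eFA eFS True b * measure_pmf.prob P (S \<inter> {s. s k})
       + obs_lik eFA eFS False b * measure_pmf.prob P (S - {s. s k})"
proof -
  have "(\<Sum>s\<in>S. pmf P s * obs_lik eFA eFS (s k) b)
      = (\<Sum>s\<in>S \<inter> {s. s k}. obs_lik eFA eFS True b * pmf P s)
        + (\<Sum>s\<in>S - {s. s k}. obs_lik eFA eFS False b * pmf P s)"
    by (subst sum.Int_Diff[of _ _ "{s. s k}"]) (auto intro!: arg_cong2[where f = "(+)"] sum.cong)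
  then show ?thesis
    by (simp add: measure_measure_pmf_finite flip: sum_distrib_left)
qed

lemma obs_prob_eq:
  fixes P :: "('c::finite \<Rightarrow> bool) pmf"
  shows "obs_prob P eFA eFS k b
    = obs_marginal (obs_lik eFA eFS True b) (obs_lik eFA eFS False b) (p_comp P k)"
proof -
  have "measure_pmf.prob P {s. s k} = 1 - p_comp P k"
    using measure_pmf.prob_compl[of "{s. \<not> s k}" P]
    by (simp add: p_comp_def Compl_eq_Diff_UNIV[symmetric] Collect_neg_eq[symmetric])
  then show ?thesis
    by (simp add: obs_prob_def sum_pmf_obs_lik obs_marginal_def p_comp_def Diff_eq Collect_neg_eq)
qed

lemma obs_prob_True: "obs_prob P eFA eFS k True = 1 - obs_prob P eFA eFS k False"
  by (simp add: obs_prob_eq obs_lik_def obs_marginal_def algebra_simps)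

lemma joint_fail_obs_series:
  fixes P :: "('c::finite \<Rightarrow> bool) pmf"
  shows "joint_fail_obs series P eFA eFS k b
    = obs_lik eFA eFS True b * (p_sys series P - p_comp P k) + obs_lik eFA eFS False b * p_comp P k"
proof -
  have "{s. \<not> series s} \<inter> {s. s k} = {s. \<not> series s} - {s. \<not> s k}"
    and "{s. \<not> series s} - {s. s k} = {s. \<not> s k}"
    by (auto simp: series_def)
  moreover have "measure_pmf.prob P ({s. \<not> series s} - {s. \<not> s k}) = p_sys series P - p_comp P k"
    unfolding p_sys_def p_comp_def
    by (rule measure_pmf.finite_measure_Diff) (auto simp: series_def)
  ultimately show ?thesis
    by (simp add: joint_fail_obs_def sum_pmf_obs_lik p_comp_def)
qed

lemma p_comp_le_p_sys_series: "p_comp P k \<le> p_sys series P"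
  unfolding p_comp_def p_sys_def
  by (rule measure_pmf.finite_measure_mono) (auto simp: series_def)

lemma post_fail_series:
  fixes P :: "('c::finite \<Rightarrow> bool) pmf"
  shows "post_fail series P eFA eFS k b = series_posterior (obs_lik eFA eFS True b)
    (obs_lik eFA eFS False b) (p_sys series P) (p_comp P k)"
  by (simp add: post_fail_def series_posterior_def joint_fail_obs_series obs_prob_eq)

lemma LG_post_eq:
  "LG_post l phi P eFA eFS k
    = obs_prob P eFA eFS k False * l (post_fail phi P eFA eFS k False)
      + obs_prob P eFA eFS k True * l (post_fail phi P eFA eFS k True)"
  by (simp add: LG_post_def h_comp_def obs_prob_True Let_def)

theorem mainTheorem3:
  fixes P :: "('c::finite \<Rightarrow> bool) pmf" and eFA eFS :: real and i j :: 'c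
  assumes "0 \<le> eFA" and "eFA < 1/2" and "0 \<le> eFS" and "eFS < 1/2"
    and "p_comp P i \<ge> p_comp P j"
  shows "((\<forall>k\<in>{i, j}. \<forall>b. obs_prob P eFA eFS k b > 0) \<longrightarrow>
           post_fail series P eFA eFS i True \<le> post_fail series P eFA eFS j True \<and>
           post_fail series P eFA eFS j True \<le> post_fail series P eFA eFS j False \<and>
           post_fail series P eFA eFS j False \<le> post_fail series P eFA eFS i False)
       \<and> (\<forall>l. concave_on {0..1} l \<longrightarrow>
              VoI_G l series P eFA eFS i \<ge> VoI_G l series P eFA eFS j)"
proof (intro conjI impI allI)
  let ?p = "p_sys series P"
  have q: "0 \<le> p_comp P j" "p_comp P j \<le> p_comp P i" "p_comp P i \<le> ?p" "?p \<le> 1"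
    using assms(5) p_comp_le_p_sys_series[of P i] by (simp_all add: p_comp_def p_sys_def)
  have post: "post_fail series P eFA eFS k False = series_posterior eFA (1 - eFS) ?p (p_comp P k)"
    "post_fail series P eFA eFS k True = series_posterior (1 - eFA) eFS ?p (p_comp P k)" for k
    by (simp_all add: post_fail_series obs_lik_def)
  {
    assume "\<forall>k\<in>{i, j}. \<forall>b. obs_prob P eFA eFS k b > 0"
    then have "0 < obs_prob P eFA eFS j False"
      by simp
    then have alarm_j: "0 < obs_marginal eFA (1 - eFS) (p_comp P j)"
      by (simp add: obs_prob_eq obs_lik_def)
    show "post_fail series P eFA eFS i True \<le> post_fail series P eFA eFS j True"
      unfolding post using assms q by (intro series_posterior_antimono) auto
    show "post_fail series P eFA eFS j False \<le> post_fail series P eFA eFS i False"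
      unfolding post using assms q by (intro series_posterior_mono) auto
    have "series_posterior (1 - eFA) eFS ?p (p_comp P j) \<le> ?p"
      using assms q by (intro series_posterior_le_prior) auto
    moreover have "?p \<le> series_posterior eFA (1 - eFS) ?p (p_comp P j)"
      using assms q alarm_j by (intro series_posterior_ge_prior) auto
    ultimately show "post_fail series P eFA eFS j True \<le> post_fail series P eFA eFS j False"
      unfolding post by linarith
  }
  fix l :: "real \<Rightarrow> real"
  assume "concave_on {0..1} l"
  then have "LG_post l series P eFA eFS i \<le> LG_post l series P eFA eFS j"
    using series_posterior_loss_antimono[of l eFA "1 - eFS" "p_comp P j" "p_comp P i" ?p] assms q
    by (simp add: LG_post_eq obs_prob_eq post obs_lik_def)
  then show "VoI_G l series P eFA eFS i \<ge> VoI_G l series P eFA eFS j"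
    by (simp add: VoI_G_def)
qed

end
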